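(* Fix $k\in\mathbb{Z}_{\ge1}$. Let $\sigma\in\mathrm{Av}(312)$ with $|\sigma|\ge k$ and $\mathrm{en}_k(\sigma)=\pi$, where $\pi\in\mathrm{Av}_k(312)$. Let $\pi'\in\mathrm{Av}_k(312)$ be such that $\mathrm{pat}_{\{1,\dots,k-1\}}(\pi')=\mathrm{pat}_{\{2,\dots,k\}}(\pi)$ (i.e. the edge $\pi'$ of $\mathcal{O}v(k,\mathrm{Av}(312))$ starts where the edge $\pi$ ends). Then there exists $\ell\in[|\sigma|+1]$ such that $\sigma^{*\ell}\in\mathrm{Av}(312)$ and $\mathrm{en}_k(\sigma^{*\ell})=\pi'$.
   Context: For $I=\{i_1<\dots<i_m\}$, $\mathrm{pat}_I(\sigma)=\mathrm{std}(\sigma(i_1),\dots,\sigma(i_m))$, where for distinct reals $x_1,\dots,x_m$, $\mathrm{std}(x_1,\dots,x_m)$ is the unique permutation $\pi$ of $[m]$ with $\pi(i)<\pi(j)\iff x_i<x_j$. $\mathrm{en}_k(\sigma)=\mathrm{pat}_{\{|\sigma|-k+1,\dots,|\sigma|\}}(\sigma)$. $\mathrm{Av}(312)$ is the set of permutations $\sigma$ with no $I$ such that $\mathrm{pat}_I(\sigma)=312$, and $\mathrm{Av}_k(312)$ those of size $k$. For $\sigma\in\mathcal S_n$ and $\ell\in[n+1]$, $\sigma^{*\ell}=\mathrm{std}(\sigma(1),\dots,\sigma(n),\ell-1/2)\in\mathcal S_{n+1}$ (append a final value $\ell$, shifting up by one all earlier values $\ge\ell$). The overlap graph $\mathcal{O}v(k,\mathrm{Av}(312))$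 has vertex set $\mathrm{Av}_{k-1}(312)$ and, for each $\pi\in\mathrm{Av}_k(312)$, an edge labelled $\pi$ from $\mathrm{pat}_{\{1,\dots,k-1\}}(\pi)$ to $\mathrm{pat}_{\{2,\dots,k\}}(\pi)$. *)

theory Defs
  imports Complex_Main
begin

text \<open>Positions are 1-indexed in the paper; list index i-1 holds sigma(i).\<close>

definition is_perm :: "nat list \<Rightarrow> bool" where
  "is_perm xs \<longleftrightarrow> distinct xs \<and> set xs = {1..length xs}"

definition std :: "'a::linorder list \<Rightarrow> nat list" where
  "std xs = map (\<lambda>x. card {y \<in> set xs. y < x} + 1) xs"

definition pat :: "nat set \<Rightarrow> nat list \<Rightarrow> nat list" where
  "pat I \<sigma> = std (map (\<lambda>i. \<sigma> ! (i - 1)) (sorted_list_of_set I))"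

definition en :: "nat \<Rightarrow> nat list \<Rightarrow> nat list" where
  "en k \<sigma> = pat {length \<sigma> - k + 1..length \<sigma>} \<sigma>"

definition contains :: "nat list \<Rightarrow> nat list \<Rightarrow> bool" where
  "contains \<tau> \<sigma> \<longleftrightarrow> (\<exists>I. I \<subseteq> {1..length \<sigma>} \<and> card I = length \<tau> \<and> pat I \<sigma> = \<tau>)"

definition Av :: "nat list \<Rightarrow> nat list set" where
  "Av \<tau> = {\<sigma>. is_perm \<sigma> \<and> \<not> contains \<tau> \<sigma>}"

definition Av_k :: "nat \<Rightarrow> nat list \<Rightarrow> nat list set" where
  "Av_k k \<tau> = {\<sigma> \<in> Av \<tau>. length \<sigma> = k}"

definition star :: "nat list \<Rightarrow> nat \<Rightarrow> nat list" where
  "star \<sigma> l = std (map real \<sigma> @ [real l - 1/2])"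

end

theory Submission
  imports Defs
begin

text \<open>Let w be the last k-1 entries of \<sigma>; they are order-isomorphic to the first k-1 entries of
  \<pi>'. Insert the new last value l just below the smallest entry of w whose counterpart in \<pi>'
  lies above the last entry r of \<pi>' (or at the top, l = |\<sigma>|+1, if there is none). Then the new
  last k entries are order-isomorphic to \<pi>'. A 312 in \<sigma>*l must end at the new entry, with its
  "1" strictly below l and its "3" at least l. If l = \<sigma>(q), the "1" cannot precede position q,
  as \<sigma> would then contain a 312 ending at q; nor follow it, as its counterpart in \<pi>', lying
  below r, would complete a 312 in \<pi>' with the counterparts of \<sigma>(q) and r.\<close>

definition order_iso :: "'a::linorder list \<Rightarrow> 'b::linorder list \<Rightarrow> bool" where
  "order_iso xs ys \<longleftrightarrow> length xs = length ys \<and>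
     (\<forall>i<length xs. \<forall>j<length xs. xs!i < xs!j \<longleftrightarrow> ys!i < ys!j)"

definition avoids_312 :: "'a::linorder list \<Rightarrow> bool" where
  "avoids_312 xs \<longleftrightarrow>
     (\<forall>a b c. a < b \<and> b < c \<and> c < length xs \<longrightarrow> \<not> (xs!b < xs!c \<and> xs!c < xs!a))"

subsection \<open>Order isomorphism and standardisation\<close>

lemma order_iso_sym: "order_iso xs ys \<Longrightarrow> order_iso ys xs"
  by (simp add: order_iso_def)

lemma order_iso_trans: "order_iso xs ys \<Longrightarrow> order_iso ys zs \<Longrightarrow> order_iso xs zs"
  by (simp add: order_iso_def)

lemma order_iso_drop: "order_iso xs ys \<Longrightarrow> order_iso (drop m xs) (drop m ys)"
  by (simp add: order_iso_def)

lemma order_iso_map_of_nat: "order_iso (map real xs) xs"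
  by (simp add: order_iso_def)

lemma order_iso_snoc:
  assumes "order_iso xs ys" "x \<notin> set xs" "y \<notin> set ys"
    and "\<And>i. i < length xs \<Longrightarrow> xs!i < x \<longleftrightarrow> ys!i < y"
  shows "order_iso (xs @ [x]) (ys @ [y])"
proof -
  have "x < xs!i \<longleftrightarrow> y < ys!i" if "i < length xs" for i
  proof -
    have "xs!i \<noteq> x" "ys!i \<noteq> y"
      using assms(1-3) that nth_mem[of i xs] nth_mem[of i ys] by (auto simp: order_iso_def)
    thus ?thesis using assms(4)[OF that] by auto
  qed
  with assms show ?thesis
    unfolding order_iso_def by (auto simp: nth_append less_Suc_eq)
qed

lemma order_iso_distinct:
  assumes "order_iso xs ys" "distinct xs"
  shows "distinct ys"
  unfolding distinct_conv_nth
proof (intro allI impI)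
  fix i j assume ij: "i < length ys" "j < length ys" "i \<noteq> j"
  hence "xs!i \<noteq> xs!j"
    using assms by (simp add: order_iso_def nth_eq_iff_index_eq)
  hence "xs!i < xs!j \<or> xs!j < xs!i" by auto
  moreover have "xs!i < xs!j \<longleftrightarrow> ys!i < ys!j" "xs!j < xs!i \<longleftrightarrow> ys!j < ys!i"
    using assms(1) ij unfolding order_iso_def by auto
  ultimately show "ys!i \<noteq> ys!j" by auto
qed

lemma std_length [simp]: "length (std xs) = length xs"
  by (simp add: std_def)

lemma std_nth: "i < length xs \<Longrightarrow> std xs ! i = card {y \<in> set xs. y < xs!i} + 1"
  by (simp add: std_def)

lemma std_less_iff:
  assumes "i < length xs" "j < length xs"
  shows "std xs ! i < std xs ! j \<longleftrightarrow> xs!i < xs!j"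
proof
  assume "xs!i < xs!j"
  hence "{y \<in> set xs. y < xs!i} \<subset> {y \<in> set xs. y < xs!j}"
    using assms by (auto intro!: nth_mem)
  hence "card {y \<in> set xs. y < xs!i} < card {y \<in> set xs. y < xs!j}"
    by (intro psubset_card_mono) auto
  thus "std xs ! i < std xs ! j" using assms by (simp add: std_nth)
next
  assume "std xs ! i < std xs ! j"
  moreover have "card {y \<in> set xs. y < xs!j} \<le> card {y \<in> set xs. y < xs!i}" if "xs!j \<le> xs!i"
    using that by (intro card_mono) auto
  ultimately show "xs!i < xs!j" using assms by (force simp: std_nth)
qed

lemma order_iso_std: "order_iso (std xs) xs"
  by (simp add: order_iso_def std_less_iff)

lemma distinct_std: "distinct xs \<Longrightarrow> distinct (std xs)"
  using order_iso_distinct[OF order_iso_sym[OF order_iso_std]] .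

lemma std_nth_eq_card_positions:
  assumes "distinct xs" "i < length xs"
  shows "std xs ! i = card {j. j < length xs \<and> xs!j < xs!i} + 1"
proof -
  have "{y \<in> set xs. y < xs!i} = (!) xs ` {j. j < length xs \<and> xs!j < xs!i}"
    by (auto simp: in_set_conv_nth)
  moreover have "inj_on ((!) xs) {j. j < length xs \<and> xs!j < xs!i}"
    using assms(1) by (auto simp: inj_on_def nth_eq_iff_index_eq)
  ultimately show ?thesis using assms(2) by (simp add: std_nth card_image)
qed

lemma std_eq_if_order_iso:
  assumes "distinct xs" "distinct ys" "order_iso xs ys"
  shows "std xs = std ys"
proof (rule nth_equalityI)
  show "length (std xs) = length (std ys)" using assms(3) by (simp add: order_iso_def)
  fix i assume "i < length (std xs)"
  hence i: "i < length xs" "i < length ys" using assms(3) by (auto simp: order_iso_def)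
  have "{j. j < length xs \<and> xs!j < xs!i} = {j. j < length ys \<and> ys!j < ys!i}"
    using assms(3) i by (auto simp: order_iso_def)
  thus "std xs ! i = std ys ! i"
    using i assms by (simp add: std_nth_eq_card_positions)
qed

lemma order_iso_iff_std_eq:
  assumes "distinct xs" "distinct ys"
  shows "order_iso xs ys \<longleftrightarrow> std xs = std ys"
  using assms std_eq_if_order_iso
  by (metis order_iso_std order_iso_sym order_iso_trans)

lemma std_drop_std: "distinct xs \<Longrightarrow> std (drop m (std xs)) = std (drop m xs)"
  by (intro std_eq_if_order_iso order_iso_drop order_iso_std distinct_drop distinct_std)

lemma is_perm_std:
  assumes "distinct xs"
  shows "is_perm (std xs)"
proof -
  have "card {y \<in> set xs. y < x} < length xs" if "x \<in> set xs" for x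
  proof -
    have "card {y \<in> set xs. y < x} < card (set xs)"
      using that by (intro psubset_card_mono) auto
    thus ?thesis using card_length[of xs] by linarith
  qed
  hence "set (std xs) \<subseteq> {1..length xs}"
    by (auto simp: std_def Suc_le_eq)
  moreover have "card (set (std xs)) = length xs"
    using distinct_std[OF assms] by (simp add: distinct_card)
  ultimately show ?thesis
    using distinct_std[OF assms] by (simp add: is_perm_def card_subset_eq)
qed

lemma std_is_perm: "is_perm p \<Longrightarrow> std p = p"
proof (rule nth_equalityI)
  fix i assume p: "is_perm p" and "i < length (std p)"
  hence i: "i < length p" by simp
  have "p!i \<in> {1..length p}" using p i nth_mem unfolding is_perm_def by blast
  hence "{y \<in> set p. y < p!i} = {1..<p!i}" using p by (auto simp: is_perm_def)
  thus "std p ! i = p ! i" using i \<open>p!i \<in> {1..length p}\<close> by (simp add: std_nth)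
qed simp

lemma pat_interval:
  assumes "1 \<le> a" "b \<le> length xs"
  shows "pat {a..b} xs = std (take (b + 1 - a) (drop (a - 1) xs))"
proof -
  have "sorted_list_of_set {a..b} = [a..<b+1]"
    using sorted_list_of_set_range[of a "b+1"] by (simp add: atLeastLessThanSuc_atLeastAtMost)
  moreover have "map (\<lambda>i. xs ! (i - 1)) [a..<b+1] = take (b + 1 - a) (drop (a - 1) xs)"
    using assms by (intro nth_equalityI) (auto simp del: upt_Suc)
  ultimately show ?thesis by (simp add: pat_def)
qed

lemma en_eq_std_drop:
  assumes "k \<le> length \<sigma>"
  shows "en k \<sigma> = std (drop (length \<sigma> - k) \<sigma>)"
proof (cases "k = 0")
  case False
  hence "en k \<sigma> = std (take (length \<sigma> + 1 - (length \<sigma> - k + 1)) (drop (length \<sigma> - k) \<sigma>))"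
    unfolding en_def using assms by (subst pat_interval) auto
  thus ?thesis using assms by simp
qed (simp add: en_def pat_def)

subsection \<open>312-avoidance\<close>

lemma avoids_312_order_iso:
  assumes "order_iso xs ys" "avoids_312 ys"
  shows "avoids_312 xs"
  unfolding avoids_312_def
proof (intro allI impI)
  fix a b c assume abc: "a < b \<and> b < c \<and> c < length xs"
  hence "xs!b < xs!c \<longleftrightarrow> ys!b < ys!c" "xs!c < xs!a \<longleftrightarrow> ys!c < ys!a" "c < length ys"
    using assms(1) unfolding order_iso_def by auto
  thus "\<not> (xs!b < xs!c \<and> xs!c < xs!a)"
    using assms(2)[unfolded avoids_312_def, rule_format, of a b c] abc by simp
qed

lemma std_eq_312_iff:
  fixes x y z :: "'a::linorder"
  assumes "distinct [x, y, z]"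
  shows "std [x, y, z] = [3, 1, 2] \<longleftrightarrow> y < z \<and> z < x"
proof
  assume "std [x, y, z] = [3, 1, 2]"
  thus "y < z \<and> z < x"
    using std_less_iff[of 1 "[x, y, z]" 2] std_less_iff[of 2 "[x, y, z]" 0] by simp
next
  assume "y < z \<and> z < x"
  hence "order_iso [x, y, z] [3::nat, 1, 2]"
    unfolding order_iso_def by (auto simp: less_Suc_eq numeral_3_eq_3)
  hence "std [x, y, z] = std [3::nat, 1, 2]"
    using assms by (intro std_eq_if_order_iso) auto
  also have "\<dots> = [3, 1, 2]" by (intro std_is_perm) (auto simp: is_perm_def)
  finally show "std [x, y, z] = [3, 1, 2]" .
qed

lemma contains_312_iff:
  assumes "distinct \<sigma>"
  shows "contains [3, 1, 2] \<sigma> \<longleftrightarrow> \<not> avoids_312 \<sigma>"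
proof
  assume "contains [3, 1, 2] \<sigma>"
  then obtain I where I: "I \<subseteq> {1..length \<sigma>}" "card I = 3" "pat I \<sigma> = [3, 1, 2]"
    unfolding contains_def by auto
  have "finite I" using I(1) finite_subset by blast
  hence L: "length (sorted_list_of_set I) = 3" "sorted_wrt (<) (sorted_list_of_set I)"
    "set (sorted_list_of_set I) = I"
    using I(2) by auto
  then obtain x y z where xyz: "sorted_list_of_set I = [x, y, z]"
    by (metis length_0_conv length_Suc_conv numeral_3_eq_3)
  have "x < y" "y < z" "1 \<le> x" "z \<le> length \<sigma>"
    using L(2,3) I(1) unfolding xyz by auto
  moreover have "std [\<sigma>!(x-1), \<sigma>!(y-1), \<sigma>!(z-1)] = [3, 1, 2]"
    using I(3) unfolding pat_def xyz by simp
  moreover have "distinct [\<sigma>!(x-1), \<sigma>!(y-1), \<sigma>!(z-1)]"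
    using assms calculation by (auto simp: nth_eq_iff_index_eq)
  moreover have "x - 1 < y - 1" "y - 1 < z - 1" "z - 1 < length \<sigma>"
    using calculation(1-4) by arith+
  ultimately show "\<not> avoids_312 \<sigma>"
    unfolding avoids_312_def using std_eq_312_iff by blast
next
  assume "\<not> avoids_312 \<sigma>"
  then obtain a b c where abc: "a < b" "b < c" "c < length \<sigma>" "\<sigma>!b < \<sigma>!c" "\<sigma>!c < \<sigma>!a"
    unfolding avoids_312_def by blast
  define I where "I = set [a+1, b+1, c+1]"
  have "sorted_list_of_set I = [a+1, b+1, c+1]"
    unfolding I_def using abc by (intro sorted_list_of_set.idem_if_sorted_distinct) auto
  hence "pat I \<sigma> = std [\<sigma>!a, \<sigma>!b, \<sigma>!c]" by (simp add: pat_def)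
  also have "\<dots> = [3, 1, 2]"
    using abc assms by (subst std_eq_312_iff) (auto simp: nth_eq_iff_index_eq)
  finally have "pat I \<sigma> = [3, 1, 2]" .
  moreover have "card I = 3" "I \<subseteq> {1..length \<sigma>}"
    unfolding I_def using abc by auto
  ultimately show "contains [3, 1, 2] \<sigma>"
    unfolding contains_def by (intro exI[of _ I]) simp
qed

lemma Av_312_iff: "\<sigma> \<in> Av [3, 1, 2] \<longleftrightarrow> is_perm \<sigma> \<and> avoids_312 \<sigma>"
  using contains_312_iff by (auto simp: Av_def is_perm_def)

lemma std_in_Av_312: "distinct xs \<Longrightarrow> avoids_312 xs \<Longrightarrow> std xs \<in> Av [3, 1, 2]"
  using Av_312_iff is_perm_std avoids_312_order_iso[OF order_iso_std] by blast

lemma avoids_312_snoc_iff: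
  "avoids_312 (xs @ [x]) \<longleftrightarrow>
     avoids_312 xs \<and> (\<forall>a b. a < b \<and> b < length xs \<longrightarrow> \<not> (xs!b < x \<and> x < xs!a))"
  (is "?L \<longleftrightarrow> ?A \<and> ?B")
proof
  assume L: ?L
  show "?A \<and> ?B"
  proof
    show ?A unfolding avoids_312_def
    proof (intro allI impI)
      fix a b c assume "a < b \<and> b < c \<and> c < length xs"
      thus "\<not> (xs!b < xs!c \<and> xs!c < xs!a)"
        using L[unfolded avoids_312_def, rule_format, of a b c] by (simp add: nth_append)
    qed
    show ?B
      using L[unfolded avoids_312_def, rule_format, of _ _ "length xs"] by (simp add: nth_append)
  qed
next
  assume "?A \<and> ?B"
  thus ?L unfolding avoids_312_def
    by (auto simp: nth_append less_Suc_eq dest: order.strict_trans)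
qed

subsection \<open>Appending a new last entry\<close>

lemma of_nat_less_minus_half_iff: "real x < real l - 1/2 \<longleftrightarrow> x < l"
proof -
  have "x < l \<longleftrightarrow> real x + 1 \<le> real l"
    by (metis of_nat_1 of_nat_add of_nat_le_iff Suc_le_eq Suc_eq_plus1)
  moreover have "x < l \<longleftrightarrow> real x < real l" by simp
  ultimately show ?thesis by linarith
qed

lemma minus_half_less_of_nat_iff: "real l - 1/2 < real x \<longleftrightarrow> l \<le> x"
  using of_nat_less_minus_half_iff[of x l] of_nat_less_minus_half_iff[of x "Suc l"] by auto

lemma minus_half_not_in_of_nat: "real l - 1/2 \<notin> set (map real xs)"
proof
  assume "real l - 1/2 \<in> set (map real xs)"
  then obtain x where "real x = real l - 1/2" by auto
  hence "\<not> x < l" "\<not> l \<le> x"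
    using of_nat_less_minus_half_iff[of x l] minus_half_less_of_nat_iff[of l x] by auto
  thus False by simp
qed

lemma threshold_exists:
  fixes u :: "'a::linorder list" and w :: "nat list"
  assumes "order_iso u w" "r \<notin> set u" "set w \<subseteq> {1..n}"
  obtains l where "l \<in> {1..n+1}" "\<And>i. i < length u \<Longrightarrow> w!i < l \<longleftrightarrow> u!i < r"
    "l = n + 1 \<or> (\<exists>j<length u. r < u!j \<and> l = w!j)"
proof -
  have w_range: "w!i \<in> {1..n}" if "i < length u" for i
  proof -
    have "i < length w" using assms(1) that by (simp add: order_iso_def)
    thus ?thesis using assms(3) nth_mem by blast
  qed
  define A where "A = {w!j | j. j < length u \<and> r < u!j}"
  define l where "l = Min (insert (n+1) A)"
  have fin: "finite (insert (n+1) A)" unfolding A_def by simp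
  have l_cases: "l = n + 1 \<or> (\<exists>j<length u. r < u!j \<and> l = w!j)"
    using Min_in[OF fin] unfolding l_def A_def by auto
  have l_range: "l \<in> {1..n+1}"
    using w_range fin unfolding l_def A_def by auto
  have threshold: "w!i < l \<longleftrightarrow> u!i < r" if i: "i < length u" for i
  proof
    assume "u!i < r"
    have "w!i < w!j" if "j < length u" "r < u!j" for j
    proof -
      have "u!i < u!j" using \<open>u!i < r\<close> that(2) by (rule less_trans)
      thus ?thesis using assms(1) i that(1) unfolding order_iso_def by auto
    qed
    thus "w!i < l"
      using w_range[OF i] fin unfolding l_def A_def by auto
  next
    assume "w!i < l"
    hence "\<not> r < u!i"
      using Min_le[OF fin, of "w!i"] i unfolding l_def A_def by auto
    thus "u!i < r"
      using assms(2) i nth_mem[of i u] by (metis linorder_neqE)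
  qed
  show ?thesis by (rule that[OF l_range threshold l_cases])
qed

lemma no_312_through_threshold:
  fixes \<sigma> :: "nat list" and u :: "'a::linorder list"
  assumes "avoids_312 \<sigma>" "distinct \<sigma>" "set \<sigma> \<subseteq> {1..length \<sigma>}" "avoids_312 (u @ [r])"
    and "m + length u = length \<sigma>"
    and threshold: "\<And>i. i < length u \<Longrightarrow> \<sigma>!(m+i) < l \<longleftrightarrow> u!i < r"
    and "l = length \<sigma> + 1 \<or> (\<exists>j<length u. r < u!j \<and> l = \<sigma>!(m+j))"
    and ab: "a < b" "b < length \<sigma>" "\<sigma>!b < l" "l \<le> \<sigma>!a"
  shows False
proof -
  have "\<sigma>!a \<in> set \<sigma>" using ab by simp
  hence "\<sigma>!a \<le> length \<sigma>" using assms(3) by auto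
  with assms(7) ab obtain j where j: "j < length u" "r < u!j" "l = \<sigma>!(m+j)" by auto
  consider "b < m + j" | "b = m + j" | "m + j < b" by linarith
  thus False
  proof cases
    case 1
    hence "\<sigma>!a \<noteq> \<sigma>!(m+j)" using assms(2,5) ab j(1) by (simp add: nth_eq_iff_index_eq)
    thus False
      using assms(1)[unfolded avoids_312_def, rule_format, of a b "m+j"] assms(5) 1 ab j by auto
  next
    case 2
    thus False using ab j by simp
  next
    case 3
    define i where "i = b - m"
    have "j < i" "i < length u" "u!i < r"
      using 3 ab assms(5) threshold[of i] j unfolding i_def by auto
    thus False
      using assms(4)[unfolded avoids_312_def, rule_format, of j i "length u"] j
      by (simp add: nth_append)
  qed
qed

lemma star_in_Av_312_threshold:
  fixes \<sigma> :: "nat list" and u :: "'a::linorder list"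
  assumes \<sigma>: "is_perm \<sigma>" "avoids_312 \<sigma>" and "avoids_312 (u @ [r])"
    and "m + length u = length \<sigma>"
    and "\<And>i. i < length u \<Longrightarrow> \<sigma>!(m+i) < l \<longleftrightarrow> u!i < r"
    and "l = length \<sigma> + 1 \<or> (\<exists>j<length u. r < u!j \<and> l = \<sigma>!(m+j))"
  shows "star \<sigma> l \<in> Av [3,1,2]"
proof -
  have "distinct \<sigma>" "set \<sigma> \<subseteq> {1..length \<sigma>}" using \<sigma>(1) by (auto simp: is_perm_def)
  note no_312 = no_312_through_threshold[OF \<sigma>(2) this assms(3-6)]
  define \<tau> where "\<tau> = map real \<sigma> @ [real l - 1/2]"
  have "distinct \<tau>"
    using \<open>distinct \<sigma>\<close> minus_half_not_in_of_nat[of l \<sigma>] by (simp add: \<tau>_def distinct_map)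
  moreover have "avoids_312 \<tau>"
    unfolding \<tau>_def avoids_312_snoc_iff
  proof (intro conjI allI impI notI)
    show "avoids_312 (map real \<sigma>)"
      using avoids_312_order_iso[OF order_iso_map_of_nat \<sigma>(2)] .
    fix a b assume ab: "a < b \<and> b < length (map real \<sigma>)"
      and "map real \<sigma> ! b < real l - 1/2 \<and> real l - 1/2 < map real \<sigma> ! a"
    hence "\<sigma>!b < l" "l \<le> \<sigma>!a"
      by (simp_all add: of_nat_less_minus_half_iff minus_half_less_of_nat_iff)
    thus False using no_312[of a b] ab by simp
  qed
  ultimately show ?thesis
    unfolding star_def \<tau>_def[symmetric] by (rule std_in_Av_312)
qed

lemma en_star_threshold:
  fixes \<sigma> u :: "nat list"
  assumes "distinct \<sigma>" "is_perm (u @ [r])"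
    and "m + length u = length \<sigma>" "order_iso u (drop m \<sigma>)"
    and "\<And>i. i < length u \<Longrightarrow> drop m \<sigma> ! i < l \<longleftrightarrow> u!i < r"
  shows "en (length u + 1) (star \<sigma> l) = u @ [r]"
proof -
  define \<tau> where "\<tau> = map real \<sigma> @ [real l - 1/2]"
  have "distinct \<tau>"
    using assms(1) minus_half_not_in_of_nat[of l \<sigma>] by (simp add: \<tau>_def distinct_map)
  have "order_iso (map real (drop m \<sigma>) @ [real l - 1/2]) (u @ [r])"
  proof (rule order_iso_snoc)
    show "order_iso (map real (drop m \<sigma>)) u"
      using order_iso_trans[OF order_iso_map_of_nat order_iso_sym[OF assms(4)]] .
    show "real l - 1/2 \<notin> set (map real (drop m \<sigma>))" by (rule minus_half_not_in_of_nat)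
    show "r \<notin> set u" using assms(2) by (simp add: is_perm_def)
    show "map real (drop m \<sigma>) ! i < real l - 1/2 \<longleftrightarrow> u ! i < r"
      if "i < length (map real (drop m \<sigma>))" for i
      using assms(3) assms(5)[of i] that by (simp add: of_nat_less_minus_half_iff)
  qed
  hence "order_iso (drop m \<tau>) (u @ [r])"
    using assms(3) by (simp add: \<tau>_def drop_map)
  hence "std (drop m \<tau>) = std (u @ [r])"
    using assms(2) distinct_drop[OF \<open>distinct \<tau>\<close>]
    by (intro std_eq_if_order_iso) (simp_all add: is_perm_def)
  also have "\<dots> = u @ [r]" using assms(2) by (rule std_is_perm)
  finally have "std (drop m \<tau>) = u @ [r]" .
  moreover have "length \<tau> = m + (length u + 1)" using assms(3) by (simp add: \<tau>_def)
  ultimately show ?thesis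
    using \<open>distinct \<tau>\<close> unfolding star_def \<tau>_def[symmetric]
    by (simp add: en_eq_std_drop std_drop_std)
qed

lemma star_extension:
  fixes \<sigma> p :: "nat list"
  assumes \<sigma>: "is_perm \<sigma>" "avoids_312 \<sigma>" and p: "is_perm p" "avoids_312 p"
    and k: "length p = k" "1 \<le> k" "k \<le> length \<sigma>"
    and window: "order_iso (butlast p) (drop (length \<sigma> + 1 - k) \<sigma>)"
  shows "\<exists>l\<in>{1..length \<sigma> + 1}. star \<sigma> l \<in> Av [3,1,2] \<and> en k (star \<sigma> l) = p"
proof -
  define m u r where "m = length \<sigma> + 1 - k" and "u = butlast p" and "r = last p"
  have p_eq: "p = u @ [r]" using k unfolding u_def r_def by (cases p rule: rev_cases) auto
  hence "r \<notin> set u" using p(1) by (simp add: is_perm_def)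
  have "m + length u = length \<sigma>" using k unfolding m_def u_def by simp
  have "set (drop m \<sigma>) \<subseteq> {1..length \<sigma>}"
    using \<sigma>(1) set_drop_subset unfolding is_perm_def by metis
  with window[folded m_def u_def] \<open>r \<notin> set u\<close> obtain l where l: "l \<in> {1..length \<sigma> + 1}"
    "\<And>i. i < length u \<Longrightarrow> drop m \<sigma> ! i < l \<longleftrightarrow> u!i < r"
    "l = length \<sigma> + 1 \<or> (\<exists>j<length u. r < u!j \<and> l = drop m \<sigma> ! j)"
    by (rule threshold_exists) (rule that)
  have "star \<sigma> l \<in> Av [3,1,2]"
    using star_in_Av_312_threshold[OF \<sigma> p(2)[unfolded p_eq] \<open>m + length u = length \<sigma>\<close>] l(2,3)
      \<open>m + length u = length \<sigma>\<close> by simp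
  moreover have "en k (star \<sigma> l) = p"
    using en_star_threshold[OF _ p(1)[unfolded p_eq] \<open>m + length u = length \<sigma>\<close>
        window[folded m_def u_def] l(2)] \<sigma>(1) k p_eq
    by (simp add: is_perm_def)
  ultimately show ?thesis using l(1) by blast
qed

lemma order_iso_butlast_suffix:
  assumes k: "1 \<le> k" "k \<le> length \<sigma>" "length \<pi> = k" "length \<pi>' = k"
    and "distinct \<sigma>" "distinct \<pi>'"
    and "en k \<sigma> = \<pi>" "pat {1..k-1} \<pi>' = pat {2..k} \<pi>"
  shows "order_iso (butlast \<pi>') (drop (length \<sigma> + 1 - k) \<sigma>)"
proof -
  have \<pi>: "\<pi> = std (drop (length \<sigma> - k) \<sigma>)"
    using assms(7) en_eq_std_drop[OF k(2)] by simp
  have "std (butlast \<pi>') = std (drop 1 \<pi>)"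
    using assms(8) k by (simp add: pat_interval butlast_conv_take)
  hence "order_iso (butlast \<pi>') (drop 1 \<pi>)"
    using assms(5,6) by (simp add: order_iso_iff_std_eq distinct_butlast distinct_std \<pi>)
  moreover have "order_iso (drop 1 \<pi>) (drop (length \<sigma> + 1 - k) \<sigma>)"
    using order_iso_drop[OF order_iso_std, of 1 "drop (length \<sigma> - k) \<sigma>"] k
    by (simp add: \<pi> Suc_diff_le)
  ultimately show ?thesis by (rule order_iso_trans)
qed

theorem mainTheorem5:
  fixes k :: nat and \<sigma> \<pi> \<pi>' :: "nat list"
  assumes "k \<ge> 1"
    and "\<sigma> \<in> Av [3,1,2]" and "length \<sigma> \<ge> k"
    and "\<pi> \<in> Av_k k [3,1,2]" and "en k \<sigma> = \<pi>"
    and "\<pi>' \<in> Av_k k [3,1,2]"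
    and "pat {1..k-1} \<pi>' = pat {2..k} \<pi>"
  shows "\<exists>l \<in> {1..length \<sigma> + 1}. star \<sigma> l \<in> Av [3,1,2] \<and> en k (star \<sigma> l) = \<pi>'"
proof -
  have "\<pi>' \<in> Av [3,1,2]" "length \<pi>' = k" "length \<pi> = k"
    using assms(4,6) by (simp_all add: Av_k_def)
  hence \<sigma>: "is_perm \<sigma>" "avoids_312 \<sigma>" and \<pi>': "is_perm \<pi>'" "avoids_312 \<pi>'" "length \<pi>' = k"
    using assms(2) Av_312_iff by blast+
  have "distinct \<sigma>" "distinct \<pi>'" using \<sigma>(1) \<pi>'(1) by (simp_all add: is_perm_def)
  hence "order_iso (butlast \<pi>') (drop (length \<sigma> + 1 - k) \<sigma>)"
    using order_iso_butlast_suffix[OF assms(1,3) \<open>length \<pi> = k\<close> \<pi>'(3) _ _ assms(5,7)] by blast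
  thus ?thesis using star_extension \<sigma> \<pi>' assms(1,3) by blast
qed

end
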